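(* Let $n=2^m$ with $m\geq 3$. If $C\subseteq X^n$ is a diameter perfect code with minimum distance $5$ (i.e., any two distinct words of $C$ are at Hamming distance at least $5$, and there exists $A\subseteq X^n$ with all pairwise distances at most $4$ and $|C|\cdot|A|=|X^n|$), then $|C| = 2^{n-1}/n$.
   Context: $X^n$ is the set of words of length $n$ over $\{*,0,1\}$ containing exactly one $*$ (equivalently, ternary words of length $n$ and weight $n-1$), so $|X^n|=n2^{n-1}$. Hamming distance is the number of coordinates in which two words differ. A code $C\subseteq X^n$ with minimum distance $d$ is diameter perfect if there is a set $A\subseteq X^n$ of diameter at most $d-1$ with $|C|\cdot|A|=|X^n|$. *)

theory Defs
  imports Complex_Main
begin

datatype sym = Star | Zero | One

definition Xn :: "nat \<Rightarrow> sym list set" where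
  "Xn n = {w. length w = n \<and> card {i. i < n \<and> w ! i = Star} = 1}"

definition hdist :: "sym list \<Rightarrow> sym list \<Rightarrow> nat" where
  "hdist u v = card {i. i < length u \<and> u ! i \<noteq> v ! i}"

definition min_dist_at_least :: "sym list set \<Rightarrow> nat \<Rightarrow> bool" where
  "min_dist_at_least C d \<longleftrightarrow> (\<forall>u\<in>C. \<forall>v\<in>C. u \<noteq> v \<longrightarrow> d \<le> hdist u v)"

definition diameter_at_most :: "sym list set \<Rightarrow> nat \<Rightarrow> bool" where
  "diameter_at_most A D \<longleftrightarrow> (\<forall>u\<in>A. \<forall>v\<in>A. hdist u v \<le> D)"

definition diameter_perfect :: "nat \<Rightarrow> sym list set \<Rightarrow> nat \<Rightarrow> bool" where
  "diameter_perfect n C d \<longleftrightarrow> C \<subseteq> Xn n \<and> min_dist_at_least C d \<and>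
     (\<exists>A. A \<subseteq> Xn n \<and> diameter_at_most A (d - 1) \<and> card C * card A = card (Xn n))"

end

theory Submission
  imports Defs "HOL-Computational_Algebra.Primes"
begin

text \<open>
  Encode a word of \<open>X^n\<close> by the position \<open>p\<close> of its star and its set \<open>S\<close> of ones. Filling in the
  star and changing at most one other coordinate turns \<open>(p, S)\<close> into \<open>2n\<close> binary words, and these
  sets are disjoint for words at distance at least 5; hence a code of minimum distance 5 has at
  most \<open>2^n / 2n\<close> words. Conversely, compressions (turning a one into a zero wherever the result is
  new) make an anticode of diameter 4 down-closed without changing its size, and a case analysis on
  the largest set of ones shows that it has fewer than \<open>2n^2\<close> words. Since \<open>|C| |A| = n 2^(n-1)\<close> is
  a power of two when \<open>n = 2^m\<close>, both factors are powers of two, and the two bounds leave only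
  \<open>|C| = 2^(n-1) / n\<close>.
\<close>

definition star_pos :: "sym list \<Rightarrow> nat" where
  "star_pos w = (THE i. i < length w \<and> w ! i = Star)"

definition ones :: "sym list \<Rightarrow> nat set" where
  "ones w = {i. i < length w \<and> w ! i = One}"

definition encode :: "sym list \<Rightarrow> nat \<times> nat set" where
  "encode w = (star_pos w, ones w)"

definition decode :: "nat \<Rightarrow> nat \<times> nat set \<Rightarrow> sym list" where
  "decode n x = map (\<lambda>i. if i = fst x then Star else if i \<in> snd x then One else Zero) [0..<n]"

definition star_pairs :: "nat \<Rightarrow> (nat \<times> nat set) set" where
  "star_pairs n = Sigma {..<n} (\<lambda>p. Pow ({..<n} - {p}))"

fun star_dist :: "nat \<times> nat set \<Rightarrow> nat \<times> nat set \<Rightarrow> nat" where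
  "star_dist (p, S) (q, T) =
     (if p = q then card (sym_diff S T) else 2 + card (sym_diff S T - {p, q}))"

lemma Xn_star_pos:
  assumes "w \<in> Xn n"
  shows "length w = n" "star_pos w < n" "w ! star_pos w = Star"
    "\<And>i. i < n \<Longrightarrow> w ! i = Star \<Longrightarrow> i = star_pos w"
proof -
  show len: "length w = n" using assms unfolding Xn_def by blast
  from assms have "card {i. i < n \<and> w ! i = Star} = 1" unfolding Xn_def by blast
  then obtain p where p: "{i. i < n \<and> w ! i = Star} = {p}" by (auto simp: card_1_singleton_iff)
  have "star_pos w = p" unfolding star_pos_def len using p by blast
  then show "star_pos w < n" "w ! star_pos w = Star" "\<And>i. i < n \<Longrightarrow> w ! i = Star \<Longrightarrow> i = star_pos w"
    using p by blast+
qed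

lemma Xn_nth:
  assumes "w \<in> Xn n" "i < n"
  shows "w ! i = (if i = star_pos w then Star else if i \<in> ones w then One else Zero)"
proof (cases "w ! i")
  case Star
  then show ?thesis using Xn_star_pos(4)[OF assms] by simp
qed (use Xn_star_pos(1,3)[OF assms(1)] assms(2) in \<open>auto simp: ones_def\<close>)

lemma encode_in_star_pairs: "w \<in> Xn n \<Longrightarrow> encode w \<in> star_pairs n"
  using Xn_star_pos(1-3)[of w n] by (auto simp: encode_def star_pairs_def ones_def)

lemma star_pairsD:
  assumes "(p, S) \<in> star_pairs n"
  shows "p < n" "S \<subseteq> {..<n}" "p \<notin> S" "finite S"
  using assms finite_subset[of S "{..<n}"] by (auto simp: star_pairs_def)

lemma decode_in_Xn:
  assumes "x \<in> star_pairs n"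
  shows "decode n x \<in> Xn n" "encode (decode n x) = x"
proof -
  obtain p S where x: "x = (p, S)" by fastforce
  note pS = star_pairsD[OF assms[unfolded x]]
  have nth: "\<And>i. i < n \<Longrightarrow> decode n x ! i = (if i = p then Star else if i \<in> S then One else Zero)"
    by (simp add: decode_def x)
  have "{i. i < n \<and> decode n x ! i = Star} = {p}"
    using nth pS(1,3) by (force split: if_splits)
  moreover have len: "length (decode n x) = n" by (simp add: decode_def)
  ultimately show dx: "decode n x \<in> Xn n" by (simp add: Xn_def)
  have "star_pos (decode n x) = p" using Xn_star_pos(4)[OF dx pS(1)] nth[OF pS(1)] by simp
  moreover have "ones (decode n x) = S"
    using nth pS(2,3) len by (force simp: ones_def split: if_splits)
  ultimately show "encode (decode n x) = x" by (simp add: encode_def x)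
qed

lemma decode_encode:
  assumes "w \<in> Xn n"
  shows "decode n (encode w) = w"
  using Xn_star_pos(1)[OF assms] Xn_nth[OF assms]
  by (intro nth_equalityI) (auto simp: decode_def encode_def)

lemma bij_betw_encode: "bij_betw encode (Xn n) (star_pairs n)"
  by (rule bij_betw_byWitness[where f' = "decode n"])
    (auto simp: decode_encode decode_in_Xn encode_in_star_pairs)

lemma finite_star_pairs: "finite (star_pairs n)"
  by (simp add: star_pairs_def)

lemma card_star_pairs: "card (star_pairs n) = n * 2 ^ (n - 1)"
proof -
  have "card (star_pairs n) = (\<Sum>p<n. card (Pow ({..<n} - {p})))"
    unfolding star_pairs_def by (subst card_SigmaI) auto
  also have "\<dots> = (\<Sum>p<n. 2 ^ (n - 1))"
    by (intro sum.cong refl) (simp add: card_Pow)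
  finally show ?thesis by simp
qed

lemma inj_on_encode: "A \<subseteq> Xn n \<Longrightarrow> inj_on encode A"
  using bij_betw_imp_inj_on[OF bij_betw_encode] by (rule inj_on_subset)

lemma card_Xn: "card (Xn n) = n * 2 ^ (n - 1)"
  using bij_betw_same_card[OF bij_betw_encode] card_star_pairs by simp

lemma hdist_encode:
  assumes u: "u \<in> Xn n" and v: "v \<in> Xn n"
  shows "hdist u v = star_dist (encode u) (encode v)"
proof -
  obtain p S q T where uv: "encode u = (p, S)" "encode v = (q, T)" by fastforce
  note pS = star_pairsD[OF encode_in_star_pairs[OF u, unfolded uv(1)]]
  note qT = star_pairsD[OF encode_in_star_pairs[OF v, unfolded uv(2)]]
  have uS: "star_pos u = p" "ones u = S" and vT: "star_pos v = q" "ones v = T"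
    using uv by (simp_all add: encode_def)
  have diff: "{i. i < length u \<and> u ! i \<noteq> v ! i} = sym_diff {p} {q} \<union> (sym_diff S T - {p, q})"
  proof (rule set_eqI)
    fix i
    show "i \<in> {i. i < length u \<and> u ! i \<noteq> v ! i} \<longleftrightarrow> i \<in> sym_diff {p} {q} \<union> (sym_diff S T - {p, q})"
    proof (cases "i < n")
      case True
      then show ?thesis
        unfolding mem_Collect_eq Xn_star_pos(1)[OF u] Xn_nth[OF u True] Xn_nth[OF v True] uS vT
        using pS(3) qT(3) by auto
    next
      case False
      then show ?thesis using Xn_star_pos(1)[OF u] pS(1,2) qT(1,2) by auto
    qed
  qed
  show ?thesis
  proof (cases "p = q")
    case True
    then have "sym_diff S T - {p, q} = sym_diff S T" using pS(3) qT(3) by auto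
    then show ?thesis using True diff uv by (simp add: hdist_def)
  next
    case False
    then have "card (sym_diff {p} {q} \<union> (sym_diff S T - {p, q})) = 2 + card (sym_diff S T - {p, q})"
      using pS(4) qT(4) by (subst card_Un_disjoint) auto
    then show ?thesis using False diff uv by (simp add: hdist_def)
  qed
qed

lemma star_dist_commute: "star_dist x y = star_dist y x"
  by (cases x; cases y) (simp add: Un_commute insert_commute)

lemma star_dist_mono:
  assumes "sym_diff S' T' \<subseteq> sym_diff S T" "finite S" "finite T"
  shows "star_dist (p, S') (q, T') \<le> star_dist (p, S) (q, T)"
proof -
  have "finite (sym_diff S T)" using assms(2,3) by simp
  then show ?thesis using assms(1) by (auto intro: card_mono)
qed

text \<open>The binary words, given by their sets of ones, obtained from \<open>(p, S)\<close> by filling in the star and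
  changing at most one further coordinate.\<close>
fun binary_shadow :: "nat \<Rightarrow> nat \<times> nat set \<Rightarrow> nat set set" where
  "binary_shadow n (p, S) = {v. v \<subseteq> {..<n} \<and> card (sym_diff S v - {p}) \<le> 1}"

lemma card_binary_shadow:
  assumes "(p, S) \<in> star_pairs n"
  shows "2 * n \<le> card (binary_shadow n (p, S))"
proof -
  note pS = star_pairsD[OF assms]
  \<comment> \<open>\<open>b\<close> fills in the star; \<open>j = p\<close> encodes that no other coordinate is changed\<close>
  define flip where "flip = (\<lambda>(j, b). sym_diff S ({j} - {p}) \<union> (if b then {p} else {}))"
  have flip_diff: "sym_diff S (flip (j, b)) - {p} = {j} - {p}" for j b
    using pS(3) by (auto simp: flip_def)
  have "flip ` ({..<n} \<times> UNIV) \<subseteq> binary_shadow n (p, S)"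
  proof
    fix v assume "v \<in> flip ` ({..<n} \<times> UNIV)"
    then obtain j b where v: "v = flip (j, b)" "j < n" by auto
    have "card ({j} - {p}) \<le> 1" by (cases "j = p") auto
    then show "v \<in> binary_shadow n (p, S)"
      using v pS(1,2) flip_diff[of j b] by (auto simp: flip_def)
  qed
  moreover have "inj_on flip ({..<n} \<times> UNIV)"
  proof (rule inj_onI)
    fix x y assume "x \<in> {..<n} \<times> (UNIV :: bool set)" "y \<in> {..<n} \<times> (UNIV :: bool set)" "flip x = flip y"
    moreover obtain j b j' b' where "x = (j, b)" "y = (j', b')" by fastforce
    ultimately have "p \<in> flip (j, b) \<longleftrightarrow> p \<in> flip (j', b')" "{j} - {p} = {j'} - {p}" "flip (j, b) = flip (j', b')"
      using flip_diff[of j b] flip_diff[of j' b'] by auto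
    then have "b = b'" "j = j'" using pS(3) by (auto simp: flip_def split: if_splits)
    then show "x = y" using \<open>x = (j, b)\<close> \<open>y = (j', b')\<close> by simp
  qed
  moreover have "finite (binary_shadow n (p, S))" by (simp add: finite_subset[of _ "Pow {..<n}"])
  ultimately have "card (flip ` ({..<n} \<times> UNIV)) \<le> card (binary_shadow n (p, S))"
    by (intro card_mono)
  then show ?thesis by (simp add: card_image[OF \<open>inj_on flip _\<close>] card_cartesian_product)
qed

lemma star_dist_le_if_shadows_meet:
  assumes "v \<in> binary_shadow n (p, S)" "v \<in> binary_shadow n (q, T)"
    and "p \<notin> S" "q \<notin> T" "finite S" "finite T"
  shows "star_dist (p, S) (q, T) \<le> 4"
proof -
  have "finite v" using assms(1) by (auto intro: finite_subset[of v "{..<n}"])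
  then have fin: "finite (sym_diff S v - {p})" "finite (sym_diff T v - {q})" using assms(5,6) by auto
  have near: "card (sym_diff S v - {p}) \<le> 1" "card (sym_diff T v - {q}) \<le> 1" using assms(1,2) by auto
  have "sym_diff S T - {p, q} \<subseteq> (sym_diff S v - {p}) \<union> (sym_diff T v - {q})" by auto
  then have "card (sym_diff S T - {p, q}) \<le> 2"
    using card_mono[OF _ \<open>_ \<subseteq> _\<close>] card_Un_le[of "sym_diff S v - {p}" "sym_diff T v - {q}"] fin near by simp
  show ?thesis
  proof (cases "p = q")
    case True
    then have "sym_diff S T - {p, q} = sym_diff S T" using assms(3,4) by auto
    then show ?thesis using True \<open>card _ \<le> 2\<close> by simp
  qed (use \<open>card _ \<le> 2\<close> in simp)
qed

lemma card_star_code_le: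
  assumes F: "F \<subseteq> star_pairs n"
    and dist: "\<And>x y. x \<in> F \<Longrightarrow> y \<in> F \<Longrightarrow> x \<noteq> y \<Longrightarrow> 5 \<le> star_dist x y"
  shows "2 * n * card F \<le> 2 ^ n"
proof -
  have finF: "finite F" using F finite_star_pairs by (rule finite_subset)
  have shadow_Pow: "binary_shadow n x \<subseteq> Pow {..<n}" for x by (cases x) auto
  have disjoint: "binary_shadow n x \<inter> binary_shadow n y = {}" if "x \<in> F" "y \<in> F" "x \<noteq> y" for x y
  proof -
    obtain p S q T where xy: "x = (p, S)" "y = (q, T)" by fastforce
    have "\<not> star_dist x y \<le> 4" using dist[OF that] by simp
    then show ?thesis
      using star_dist_le_if_shadows_meet[of _ n p S q T] star_pairsD that F xy by blast
  qed
  have "2 * n * card F = (\<Sum>x\<in>F. 2 * n)" by simp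
  also have "\<dots> \<le> (\<Sum>x\<in>F. card (binary_shadow n x))"
    using card_binary_shadow F by (intro sum_mono) (metis subsetD surj_pair)
  also have "\<dots> = card (\<Union>x\<in>F. binary_shadow n x)"
    using finF disjoint shadow_Pow finite_subset[OF shadow_Pow] by (intro card_UN_disjoint[symmetric]) auto
  also have "\<dots> \<le> card (Pow {..<n :: nat})"
    using shadow_Pow by (intro card_mono) auto
  finally show ?thesis by (simp add: card_Pow)
qed

definition star_diameter_at_most :: "(nat \<times> nat set) set \<Rightarrow> nat \<Rightarrow> bool" where
  "star_diameter_at_most F d \<longleftrightarrow> (\<forall>x\<in>F. \<forall>y\<in>F. star_dist x y \<le> d)"

definition down_closed :: "(nat \<times> nat set) set \<Rightarrow> bool" where
  "down_closed F \<longleftrightarrow> (\<forall>(p, S)\<in>F. \<forall>i\<in>S. (p, S - {i}) \<in> F)"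

definition compress :: "nat \<Rightarrow> (nat \<times> nat set) set \<Rightarrow> nat \<times> nat set \<Rightarrow> nat \<times> nat set" where
  "compress i F x = (if i \<in> snd x \<and> (fst x, snd x - {i}) \<notin> F then (fst x, snd x - {i}) else x)"

definition ones_weight :: "(nat \<times> nat set) set \<Rightarrow> nat" where
  "ones_weight F = (\<Sum>x\<in>F. card (snd x))"

lemma inj_on_compress: "inj_on (compress i F) F"
proof (rule inj_onI)
  fix x y assume xy: "x \<in> F" "y \<in> F" "compress i F x = compress i F y"
  show "x = y"
  proof (cases "compress i F x = x"; cases "compress i F y = y")
    assume "compress i F x \<noteq> x" "compress i F y \<noteq> y"
    then have "i \<in> snd x" "i \<in> snd y" "fst x = fst y" "snd x - {i} = snd y - {i}"
      using xy(3) by (auto simp: compress_def split: if_splits)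
    then show "x = y" by (metis insert_Diff prod_eqI)
  qed (use xy in \<open>auto simp: compress_def split: if_splits\<close>)
qed

lemma compress_star_pairs:
  assumes "F \<subseteq> star_pairs n"
  shows "compress i F ` F \<subseteq> star_pairs n"
proof
  fix y assume "y \<in> compress i F ` F"
  then obtain x where "x \<in> F" "y = compress i F x" by blast
  moreover have "(fst x, snd x - {i}) \<in> star_pairs n" if "x \<in> F"
  proof -
    have "x \<in> star_pairs n" using that assms by blast
    then show ?thesis by (cases x) (auto simp: star_pairs_def)
  qed
  ultimately show "y \<in> star_pairs n" using assms by (auto simp: compress_def)
qed

lemma finite_snd_star_pairs: "x \<in> star_pairs n \<Longrightarrow> finite (snd x)"
  by (cases x) (simp add: star_pairsD(4))

lemma star_dist_compress_left:
  assumes F: "F \<subseteq> star_pairs n" and diam: "star_diameter_at_most F d"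
    and x: "x \<in> F" "compress i F x \<noteq> x" and y: "y \<in> F" "compress i F y = y"
  shows "star_dist (compress i F x) y \<le> d"
proof -
  obtain p S q T where xy: "x = (p, S)" "y = (q, T)" by fastforce
  have iS: "i \<in> S" and cx: "compress i F x = (p, S - {i})"
    using x(2) by (auto simp: compress_def xy split: if_splits)
  show ?thesis
  proof (cases "i \<in> T")
    case True
    \<comment> \<open>\<open>y\<close> stays because \<open>(q, T - {i})\<close> is in \<open>F\<close> already, at the distance we need\<close>
    then have "(q, T - {i}) \<in> F" using y by (auto simp: compress_def xy split: if_splits)
    moreover have "sym_diff (S - {i}) T = sym_diff S (T - {i})" using iS True by auto
    then have "star_dist (p, S - {i}) (q, T) = star_dist (p, S) (q, T - {i})"
      by (simp only: star_dist.simps)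
    moreover have "star_dist (p, S) (q, T - {i}) \<le> d"
      using diam x(1) \<open>(q, T - {i}) \<in> F\<close> xy unfolding star_diameter_at_most_def by blast
    ultimately show ?thesis using cx xy by (simp del: star_dist.simps)
  next
    case False
    then have "sym_diff (S - {i}) T \<subseteq> sym_diff S T" by auto
    moreover have "finite S" "finite T" using finite_snd_star_pairs x(1) y(1) F xy by fastforce+
    ultimately have "star_dist (p, S - {i}) (q, T) \<le> star_dist (p, S) (q, T)"
      by (rule star_dist_mono)
    moreover have "star_dist (p, S) (q, T) \<le> d"
      using diam x(1) y(1) xy unfolding star_diameter_at_most_def by blast
    ultimately show ?thesis using cx xy by (simp del: star_dist.simps)
  qed
qed

lemma star_diameter_compress:
  assumes F: "F \<subseteq> star_pairs n" and diam: "star_diameter_at_most F d"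
  shows "star_diameter_at_most (compress i F ` F) d"
  unfolding star_diameter_at_most_def
proof (intro ballI)
  fix x' y' assume "x' \<in> compress i F ` F" "y' \<in> compress i F ` F"
  then obtain x y where xy: "x \<in> F" "y \<in> F" "x' = compress i F x" "y' = compress i F y" by blast
  have dist: "star_dist x y \<le> d" using diam xy by (simp add: star_diameter_at_most_def)
  consider "compress i F x \<noteq> x" "compress i F y \<noteq> y" | "compress i F x \<noteq> x" "compress i F y = y"
    | "compress i F x = x" "compress i F y \<noteq> y" | "compress i F x = x" "compress i F y = y"
    by blast
  then show "star_dist x' y' \<le> d"
  proof cases
    case 1
    obtain p S q T where pq: "x = (p, S)" "y = (q, T)" by fastforce
    with 1 have "x' = (p, S - {i})" "y' = (q, T - {i})"
      using xy by (auto simp: compress_def split: if_splits)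
    moreover have "sym_diff (S - {i}) (T - {i}) \<subseteq> sym_diff S T" by auto
    moreover have "finite S" "finite T" using finite_snd_star_pairs xy(1,2) F pq by fastforce+
    ultimately have "star_dist x' y' \<le> star_dist x y"
      using star_dist_mono pq by presburger
    then show ?thesis using dist by simp
  next
    case 2
    then show ?thesis using star_dist_compress_left[OF F diam] xy by simp
  next
    case 3
    then show ?thesis using star_dist_compress_left[OF F diam, of y] xy star_dist_commute by simp
  next
    case 4
    then show ?thesis using dist xy by simp
  qed
qed

lemma ones_weight_compress_less:
  assumes F: "F \<subseteq> star_pairs n" and x: "x \<in> F" "compress i F x \<noteq> x"
  shows "ones_weight (compress i F ` F) < ones_weight F"
proof -
  have fin: "finite (snd y)" if "y \<in> F" for y
    using that F finite_snd_star_pairs by blast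
  have less: "card (snd (compress i F y)) < card (snd y)" if "y \<in> F" "compress i F y \<noteq> y" for y
    using that card_Diff1_less[OF fin[OF that(1)]] by (auto simp: compress_def split: if_splits)
  have "ones_weight (compress i F ` F) = (\<Sum>y\<in>F. card (snd (compress i F y)))"
    unfolding ones_weight_def by (rule sum.reindex[OF inj_on_compress, unfolded comp_def])
  also have "\<dots> < (\<Sum>y\<in>F. card (snd y))"
  proof (rule sum_strict_mono_ex1)
    show "finite F" using F finite_star_pairs by (rule finite_subset)
    show "\<forall>y\<in>F. card (snd (compress i F y)) \<le> card (snd y)"
      using less by (metis order.refl order_less_imp_le)
    show "\<exists>y\<in>F. card (snd (compress i F y)) < card (snd y)" using less x by blast
  qed
  finally show ?thesis by (simp add: ones_weight_def)
qed

text \<open>A compression of minimal total weight is down-closed.\<close>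
lemma obtain_down_closed:
  assumes "F \<subseteq> star_pairs n" "star_diameter_at_most F d"
  obtains G where "G \<subseteq> star_pairs n" "card G = card F" "star_diameter_at_most G d" "down_closed G"
proof -
  define P where "P G \<longleftrightarrow> G \<subseteq> star_pairs n \<and> card G = card F \<and> star_diameter_at_most G d" for G
  obtain G where G: "P G" and min: "\<And>G'. P G' \<Longrightarrow> ones_weight G \<le> ones_weight G'"
    using ex_has_least_nat[of P F ones_weight] assms by (auto simp: P_def)
  have fixed: "compress i G x = x" if "x \<in> G" for i x
  proof (rule ccontr)
    assume "compress i G x \<noteq> x"
    then have "ones_weight (compress i G ` G) < ones_weight G"
      using ones_weight_compress_less[of G n x i] G that by (simp add: P_def)
    moreover have "P (compress i G ` G)"
      using G compress_star_pairs[of G n i] star_diameter_compress[of G n d i]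
        card_image[OF inj_on_compress[of i G]] by (simp add: P_def)
    ultimately show False using min by fastforce
  qed
  have "(p, S - {i}) \<in> G" if "(p, S) \<in> G" "i \<in> S" for p S i
    using fixed[OF that(1), of i] that(2) by (auto simp: compress_def split: if_splits)
  then have "down_closed G" by (auto simp: down_closed_def)
  then show ?thesis using G that by (auto simp: P_def)
qed

lemma down_closed_Diff:
  assumes "down_closed F" "(p, S) \<in> F" "finite D"
  shows "(p, S - D) \<in> F"
  using assms(3)
proof (induction D)
  case empty
  then show ?case using assms(2) by simp
next
  case (insert i D)
  have "S - insert i D = S - D - {i}" by blast
  moreover have "(p, S - D - {i}) \<in> F" if "i \<in> S - D"
    using assms(1) insert.IH that unfolding down_closed_def by blast
  moreover have "S - D - {i} = S - D" if "i \<notin> S - D" using that by blast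
  ultimately show ?case using insert.IH by metis
qed

lemma down_closed_subset:
  assumes "down_closed F" "(p, S) \<in> F" "T \<subseteq> S" "finite S"
  shows "(p, T) \<in> F"
  using down_closed_Diff[OF assms(1,2), of "S - T"] assms(3,4) by (simp add: double_diff)

lemma card_near_subsets_le:
  assumes "finite S"
  shows "card {T. T \<subseteq> {..<n} \<and> card (T - S) \<le> 1} \<le> 2 ^ card S * (n + 1)"
proof -
  define E where "E = insert {} ((\<lambda>c. {c}) ` {..<n})"
  have "{T. T \<subseteq> {..<n} \<and> card (T - S) \<le> 1} \<subseteq> (\<lambda>(U, V). U \<union> V) ` (Pow S \<times> E)"
  proof
    fix T assume T: "T \<in> {T. T \<subseteq> {..<n} \<and> card (T - S) \<le> 1}"
    then have "finite (T - S)" by (auto intro: finite_subset[of _ "{..<n}"])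
    moreover consider "card (T - S) = 0" | "card (T - S) = 1" using T by force
    ultimately have "T - S = {} \<or> (\<exists>c. T - S = {c})"
      by cases (auto simp: card_1_singleton_iff)
    then have "T - S \<in> E" using T by (auto simp: E_def)
    moreover have "T = (T \<inter> S) \<union> (T - S)" by blast
    ultimately show "T \<in> (\<lambda>(U, V). U \<union> V) ` (Pow S \<times> E)"
      by (intro image_eqI[of _ _ "(T \<inter> S, T - S)"]) auto
  qed
  then have "card {T. T \<subseteq> {..<n} \<and> card (T - S) \<le> 1} \<le> card ((\<lambda>(U, V). U \<union> V) ` (Pow S \<times> E))"
    using assms by (intro card_mono) (auto simp: E_def)
  also have "\<dots> \<le> card (Pow S \<times> E)" by (rule card_image_le) (simp add: E_def assms)
  also have "\<dots> = 2 ^ card S * card E" using assms by (simp add: card_cartesian_product card_Pow)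
  also have "card E \<le> n + 1"
    using card_insert_le_m1[of "n + 1" "(\<lambda>c. {c}) ` {..<n}"] card_image_le[of "{..<n}" "\<lambda>c. {c}"]
    by (simp add: E_def)
  finally show ?thesis by simp
qed

definition near_doubletons :: "'a set \<Rightarrow> 'a set \<Rightarrow> 'a set set" where
  "near_doubletons U P = {T. T \<subseteq> U \<and> card T = 2 \<and> card (T - P) \<le> 1}"

lemma finite_near_doubletons: "finite U \<Longrightarrow> finite (near_doubletons U P)"
  by (rule finite_subset[of _ "Pow U"]) (auto simp: near_doubletons_def)

lemma card_near_doubletons_le:
  assumes "finite U" "P \<subseteq> U" "card P = 2"
  shows "card (near_doubletons U P) \<le> 1 + 2 * (card U - 2)"
proof -
  define K where "K = (\<Union>x\<in>P. (\<lambda>c. {x, c}) ` (U - P))"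
  have "near_doubletons U P \<subseteq> insert P K"
  proof
    fix T assume "T \<in> near_doubletons U P"
    then have T: "T \<subseteq> U" "card T = 2" "card (T - P) \<le> 1" by (auto simp: near_doubletons_def)
    then obtain x y where xy: "T = {x, y}" "x \<noteq> y" by (auto simp: card_2_iff)
    show "T \<in> insert P K"
    proof (cases "T \<subseteq> P")
      case True
      then have "T = P" using assms T by (intro card_subset_eq) (auto intro: finite_subset)
      then show ?thesis by simp
    next
      case False
      then have "x \<notin> P \<or> y \<notin> P" using xy by auto
      moreover have "\<not> (x \<notin> P \<and> y \<notin> P)"
      proof
        assume "x \<notin> P \<and> y \<notin> P"
        then have "T - P = T" using xy by auto
        then show False using T by auto
      qed
      ultimately have "(x \<in> P \<and> y \<in> U - P) \<or> (y \<in> P \<and> x \<in> U - P)" using T xy by auto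
      then show ?thesis using xy by (auto simp: K_def insert_commute)
    qed
  qed
  moreover have "finite K" using assms by (simp add: K_def finite_subset)
  ultimately have "card (near_doubletons U P) \<le> card (insert P K)"
    by (intro card_mono) auto
  also have "\<dots> \<le> 1 + card K" using \<open>finite K\<close> by (simp add: card_insert_if)
  also have "card K \<le> (\<Sum>x\<in>P. card ((\<lambda>c. {x, c}) ` (U - P)))"
    unfolding K_def using assms by (intro card_UN_le) (auto intro: finite_subset)
  also have "\<dots> \<le> (\<Sum>x\<in>P. card (U - P))" by (intro sum_mono card_image_le) (simp add: assms)
  also have "\<dots> = 2 * (card U - 2)" using assms by (simp add: card_Diff_subset finite_subset)
  finally show ?thesis by simp
qed

locale down_closed_anticode =
  fixes n :: nat and F :: "(nat \<times> nat set) set"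
  assumes subset_star_pairs: "F \<subseteq> star_pairs n"
    and down_closed: "down_closed F"
    and diameter: "star_diameter_at_most F 4"
begin

lemma memD:
  assumes "(q, T) \<in> F"
  shows "q < n" "T \<subseteq> {..<n} - {q}" "finite T"
  using star_pairsD[of q T n] assms subset_star_pairs by auto

lemma mem_subset: "(p, S) \<in> F \<Longrightarrow> T \<subseteq> S \<Longrightarrow> (p, T) \<in> F"
  using down_closed_subset[OF down_closed] memD(3) by blast

lemma dist_le: "x \<in> F \<Longrightarrow> y \<in> F \<Longrightarrow> star_dist x y \<le> 4"
  using diameter by (simp add: star_diameter_at_most_def)

lemma finite_F: "finite F"
  using subset_star_pairs finite_star_pairs by (rule finite_subset)

lemma card_at_most_one_ones: "card {x \<in> F. card (snd x) \<le> 1} \<le> n * n"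
proof -
  have "{x \<in> F. card (snd x) \<le> 1} \<subseteq> (\<lambda>(q, c). (q, {c} - {q})) ` ({..<n} \<times> {..<n})"
  proof
    fix x assume x: "x \<in> {x \<in> F. card (snd x) \<le> 1}"
    obtain q T where qT: "x = (q, T)" by fastforce
    note T = memD[of q T]
    consider "T = {}" | c where "T = {c}"
      using x qT T(3) by (auto simp: card_le_Suc0_iff_eq)
    then show "x \<in> (\<lambda>(q, c). (q, {c} - {q})) ` ({..<n} \<times> {..<n})"
    proof cases
      case 1
      then show ?thesis using x qT T(1) by (intro image_eqI[of _ _ "(q, q)"]) auto
    next
      case (2 c)
      then show ?thesis using x qT T(1,2) by (intro image_eqI[of _ _ "(q, c)"]) auto
    qed
  qed
  then have "card {x \<in> F. card (snd x) \<le> 1} \<le> card ((\<lambda>(q, c). (q, {c} - {q})) ` ({..<n} \<times> {..<n}))"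
    by (intro card_mono) auto
  also have "\<dots> \<le> n * n" using card_image_le[of "{..<n} \<times> {..<n}"] by (simp add: card_cartesian_product)
  finally show ?thesis .
qed

lemma card_Diff_le_one_if_same_star:
  assumes pS: "(p, S) \<in> F" "card S = 3" and pT: "(p, T) \<in> F"
  shows "card (T - S) \<le> 1"
proof (rule ccontr)
  assume "\<not> card (T - S) \<le> 1"
  moreover have "finite (T - S)" using memD(3)[OF pT] by simp
  ultimately obtain c d where cd: "c \<in> T - S" "d \<in> T - S" "c \<noteq> d"
    by (auto simp: card_le_Suc0_iff_eq)
  then have "(p, {c, d}) \<in> F" using mem_subset[OF pT] by auto
  then have "star_dist (p, {c, d}) (p, S) \<le> 4" using dist_le pS(1) by blast
  moreover have "sym_diff {c, d} S = {c, d} \<union> S" using cd by auto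
  moreover have "card ({c, d} \<union> S) = 5"
    using cd pS(2) memD(3)[OF pS(1)] by (subst card_Un_disjoint) auto
  ultimately show False by simp
qed

lemma other_star_if_large:
  assumes pS: "(p, S) \<in> F" "card S = 3" and qT: "(q, T) \<in> F" "q \<noteq> p"
  shows "q \<in> S" "T \<subseteq> insert p S"
proof -
  have finS: "finite S" and pS': "p \<notin> S" using memD[OF pS(1)] by auto
  have "(q, {}) \<in> F" using mem_subset[OF qT(1)] by simp
  then have "star_dist (q, {}) (p, S) \<le> 4" using dist_le pS(1) by blast
  then have "card (S - {q, p}) \<le> 2" using qT(2) by simp
  moreover have "S - {q, p} = S - {q}" using pS' by auto
  ultimately show qS: "q \<in> S" using pS(2) by (cases "q \<in> S") auto
  show "T \<subseteq> insert p S"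
  proof
    fix c assume cT: "c \<in> T"
    show "c \<in> insert p S"
    proof (rule ccontr)
      assume c: "c \<notin> insert p S"
      have "c \<noteq> q" using memD(2)[OF qT(1)] cT by auto
      have "(q, {c}) \<in> F" using mem_subset[OF qT(1)] cT by simp
      then have "star_dist (q, {c}) (p, S) \<le> 4" using dist_le pS(1) by blast
      moreover have "sym_diff {c} S - {q, p} = insert c (S - {q})" using c \<open>c \<noteq> q\<close> pS' by auto
      moreover have "card (insert c (S - {q})) = 3" using c qS finS pS(2) by simp
      ultimately show False using qT(2) by simp
    qed
  qed
qed

lemma card_le_if_three_ones:
  assumes "(p, S) \<in> F" "3 \<le> card S"
  shows "card F \<le> 8 * (n + 1) + 48"
proof -
  obtain S0 where S0: "S0 \<subseteq> S" "card S0 = 3" using obtain_subset_with_card_n[OF assms(2)] by metis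
  have pS0: "(p, S0) \<in> F" using mem_subset[OF assms(1) S0(1)] .
  have finS0: "finite S0" and pS0': "p \<notin> S0" using memD[OF pS0] by auto
  define Q where "Q = {T. T \<subseteq> {..<n} \<and> card (T - S0) \<le> 1}"
  have "F \<subseteq> ({p} \<times> Q) \<union> (S0 \<times> Pow (insert p S0))"
  proof
    fix x assume x: "x \<in> F"
    obtain q T where qT: "x = (q, T)" by fastforce
    show "x \<in> ({p} \<times> Q) \<union> (S0 \<times> Pow (insert p S0))"
    proof (cases "q = p")
      case True
      then show ?thesis
        using x qT card_Diff_le_one_if_same_star[OF pS0 S0(2)] memD(2)[of q T] by (auto simp: Q_def)
    next
      case False
      then show ?thesis using x qT other_star_if_large[OF pS0 S0(2)] by auto
    qed
  qed
  moreover have "finite Q" by (rule finite_subset[of _ "Pow {..<n}"]) (auto simp: Q_def)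
  ultimately have "card F \<le> card (({p} \<times> Q) \<union> (S0 \<times> Pow (insert p S0)))"
    using finS0 by (intro card_mono) auto
  also have "\<dots> \<le> card ({p} \<times> Q) + card (S0 \<times> Pow (insert p S0))" by (rule card_Un_le)
  also have "card ({p} \<times> Q) \<le> 8 * (n + 1)"
    using card_near_subsets_le[OF finS0, of n] S0(2) by (simp add: Q_def card_cartesian_product)
  also have "card (S0 \<times> Pow (insert p S0)) = 48"
    using S0(2) finS0 pS0' by (simp add: card_cartesian_product card_Pow)
  finally show ?thesis by simp
qed

lemma subset_if_star_outside_doubleton:
  assumes pab: "(p, {a, b}) \<in> F" "a \<noteq> b" and qT: "(q, T) \<in> F" "q \<notin> {p, a, b}"
  shows "T \<subseteq> {a, b, p}"
proof
  fix c assume cT: "c \<in> T"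
  show "c \<in> {a, b, p}"
  proof (rule ccontr)
    assume c: "c \<notin> {a, b, p}"
    have "c \<noteq> q" using memD(2)[OF qT(1)] cT by auto
    have "(q, {c}) \<in> F" using mem_subset[OF qT(1)] cT by simp
    then have "star_dist (q, {c}) (p, {a, b}) \<le> 4" using dist_le pab(1) by blast
    moreover have "sym_diff {c} {a, b} - {q, p} = {c, a, b}"
      using c \<open>c \<noteq> q\<close> qT(2) memD(2)[OF pab(1)] by auto
    moreover have "card {c, a, b} = 3" using c pab(2) by simp
    ultimately show False using qT(2) by simp
  qed
qed

lemma card_Diff_le_one_if_star_in_doubleton:
  assumes prs: "(p, {r, s}) \<in> F" "r \<noteq> s" and rT: "(r, T) \<in> F"
  shows "card (T - {p, s}) \<le> 1"
proof (rule ccontr)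
  assume "\<not> card (T - {p, s}) \<le> 1"
  moreover have "finite (T - {p, s})" using memD(3)[OF rT] by simp
  ultimately obtain c d where cd: "c \<in> T - {p, s}" "d \<in> T - {p, s}" "c \<noteq> d"
    by (auto simp: card_le_Suc0_iff_eq)
  have "c \<noteq> r" "d \<noteq> r" using memD(2)[OF rT] cd by auto
  have "r \<noteq> p" using memD(2)[OF prs(1)] by auto
  have "(r, {c, d}) \<in> F" using mem_subset[OF rT] cd by auto
  then have "star_dist (r, {c, d}) (p, {r, s}) \<le> 4" using dist_le prs(1) by blast
  moreover have "sym_diff {c, d} {r, s} - {r, p} = {s, c, d}"
    using cd \<open>c \<noteq> r\<close> \<open>d \<noteq> r\<close> prs(2) memD(2)[OF prs(1)] by auto
  moreover have "card {s, c, d} = 3" using cd by auto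
  ultimately show False using \<open>r \<noteq> p\<close> by simp
qed

lemma doubletons_subset:
  assumes pab: "(p, {a, b}) \<in> F" "a \<noteq> b"
  shows "{x \<in> F. card (snd x) = 2} \<subseteq>
    {p} \<times> {T. T \<subseteq> {..<n} - {p} \<and> card T = 2}
    \<union> {a} \<times> near_doubletons ({..<n} - {a}) {p, b}
    \<union> {b} \<times> near_doubletons ({..<n} - {b}) {p, a}
    \<union> ({..<n} - {p, a, b}) \<times> {{a, b}, {a, p}, {b, p}}"
    (is "_ \<subseteq> ?Pairs \<union> ?Ka \<union> ?Kb \<union> ?Others")
proof
  fix x assume x: "x \<in> {x \<in> F. card (snd x) = 2}"
  obtain q T where qT: "x = (q, T)" by fastforce
  have T: "(q, T) \<in> F" "card T = 2" using x qT by auto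
  note Tq = memD[OF T(1)]
  consider "q = p" | "q = a" | "q = b" | "q \<notin> {p, a, b}" by blast
  then show "x \<in> ?Pairs \<union> ?Ka \<union> ?Kb \<union> ?Others"
  proof cases
    case 1
    then show ?thesis using qT T Tq by simp
  next
    case 2
    then show ?thesis
      using qT T Tq card_Diff_le_one_if_star_in_doubleton[OF pab] by (simp add: near_doubletons_def)
  next
    case 3
    moreover have "(p, {b, a}) \<in> F" using pab(1) by (simp add: insert_commute)
    ultimately show ?thesis
      using qT T Tq card_Diff_le_one_if_star_in_doubleton[of p b a] pab(2)
      by (simp add: near_doubletons_def)
  next
    case 4
    then have "T \<subseteq> {a, b, p}" using subset_if_star_outside_doubleton[OF pab T(1)] by simp
    moreover obtain y z where "T = {y, z}" "y \<noteq> z" using T(2) by (auto simp: card_2_iff)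
    ultimately have "T \<in> {{a, b}, {a, p}, {b, p}}" by auto
    then show ?thesis using 4 qT Tq(1) by simp
  qed
qed

lemma card_doubletons_le:
  assumes pab: "(p, {a, b}) \<in> F" "a \<noteq> b"
  shows "card {x \<in> F. card (snd x) = 2} \<le> ((n - 1) choose 2) + 2 * (1 + 2 * (n - 3)) + 3 * (n - 3)"
proof -
  have p: "p < n" "a < n" "b < n" "p \<noteq> a" "p \<noteq> b" using memD[OF pab(1)] by auto
  have card_K: "card (near_doubletons ({..<n} - {r}) {p, s}) \<le> 1 + 2 * (n - 3)"
    if "r < n" "s < n" "r \<noteq> s" "p \<noteq> r" "p \<noteq> s" for r s
    using card_near_doubletons_le[of "{..<n} - {r}" "{p, s}"] that p(1) by auto
  have "card ({..<n} - {p, a, b}) = n - 3" using p pab(2) by (subst card_Diff_subset) auto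
  moreover have "card {{a, b}, {a, p}, {b, p}} \<le> 3" by (simp add: card_insert_le_m1)
  ultimately have card_Others: "card (({..<n} - {p, a, b}) \<times> {{a, b}, {a, p}, {b, p}}) \<le> 3 * (n - 3)"
    by (simp add: card_cartesian_product)
  have "finite {T. T \<subseteq> {..<n} - {p} \<and> card T = 2}" by (rule finite_subset[of _ "Pow {..<n}"]) auto
  then have "card {x \<in> F. card (snd x) = 2} \<le>
      card ({p} \<times> {T. T \<subseteq> {..<n} - {p} \<and> card T = 2}
        \<union> {a} \<times> near_doubletons ({..<n} - {a}) {p, b}
        \<union> {b} \<times> near_doubletons ({..<n} - {b}) {p, a}
        \<union> ({..<n} - {p, a, b}) \<times> {{a, b}, {a, p}, {b, p}})"
    (is "_ \<le> card (?A \<union> ?B \<union> ?C \<union> ?D)")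
    by (intro card_mono[OF _ doubletons_subset[OF pab]]) (simp add: finite_near_doubletons)
  also have "\<dots> \<le> card ?A + card ?B + card ?C + card ?D"
    using card_Un_le[of "?A \<union> ?B \<union> ?C" ?D] card_Un_le[of "?A \<union> ?B" ?C] card_Un_le[of ?A ?B]
    by linarith
  also have "card ({p} \<times> {T. T \<subseteq> {..<n} - {p} \<and> card T = 2}) = (n - 1) choose 2"
    using n_subsets[of "{..<n} - {p}" 2] p(1) by (simp add: card_cartesian_product)
  finally show ?thesis using card_K[of a b] card_K[of b a] card_Others p pab(2)
    by (simp add: card_cartesian_product)
qed

lemma card_less:
  assumes "8 \<le> n"
  shows "card F < 2 * n * n"
proof -
  obtain k where k: "n = k + 8" using assms by (metis add.commute le_Suc_ex)
  show ?thesis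
  proof (cases "\<exists>(p, S)\<in>F. 3 \<le> card S")
    case True
    then obtain p S where "(p, S) \<in> F" "3 \<le> card S" by blast
    then have "card F \<le> 8 * (n + 1) + 48" by (rule card_le_if_three_ones)
    then show ?thesis using k by (simp add: algebra_simps)
  next
    case False
    have "card {x \<in> F. card (snd x) = 2} < n * n"
    proof (cases "{x \<in> F. card (snd x) = 2} = {}")
      case True
      show ?thesis unfolding True using assms by simp
    next
      case False
      then obtain p a b where "(p, {a, b}) \<in> F" "a \<noteq> b" by (auto simp: card_2_iff)
      then have le: "card {x \<in> F. card (snd x) = 2} \<le> ((n - 1) choose 2) + 2 * (1 + 2 * (n - 3)) + 3 * (n - 3)"
        by (rule card_doubletons_le)
      have "(n - 1) choose 2 = (n - 1) * (n - 2) div 2"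
        using choose_two[of "n - 1"] by (simp add: diff_diff_left numeral_2_eq_2)
      then have "2 * ((n - 1) choose 2) \<le> (n - 1) * (n - 2)" by simp
      then show ?thesis using le k by (simp add: algebra_simps)
    qed
    moreover have "F \<subseteq> {x \<in> F. card (snd x) \<le> 1} \<union> {x \<in> F. card (snd x) = 2}"
      using False by fastforce
    then have "card F \<le> card ({x \<in> F. card (snd x) \<le> 1} \<union> {x \<in> F. card (snd x) = 2})"
      using finite_F by (intro card_mono) auto
    then have "card F \<le> card {x \<in> F. card (snd x) \<le> 1} + card {x \<in> F. card (snd x) = 2}"
      using card_Un_le order_trans by blast
    ultimately show ?thesis using card_at_most_one_ones by simp
  qed
qed

end

lemma card_code_le:
  assumes CX: "C \<subseteq> Xn n" and dist: "min_dist_at_least C 5"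
  shows "2 * n * card C \<le> 2 ^ n"
proof -
  have "2 * n * card (encode ` C) \<le> 2 ^ n"
  proof (rule card_star_code_le)
    show "encode ` C \<subseteq> star_pairs n" using CX encode_in_star_pairs by blast
    fix x y assume "x \<in> encode ` C" "y \<in> encode ` C" "x \<noteq> y"
    then obtain u v where uv: "u \<in> C" "v \<in> C" "u \<noteq> v" "x = encode u" "y = encode v" by blast
    then have "5 \<le> hdist u v" using dist by (auto simp: min_dist_at_least_def)
    moreover have "u \<in> Xn n" "v \<in> Xn n" using uv CX by auto
    ultimately show "5 \<le> star_dist x y" using hdist_encode[of u n v] uv by simp
  qed
  then show ?thesis using card_image[OF inj_on_encode[OF CX]] by simp
qed

lemma card_anticode_less:
  assumes "8 \<le> n" and AX: "A \<subseteq> Xn n" and diam: "diameter_at_most A 4"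
  shows "card A < 2 * n * n"
proof -
  have "encode ` A \<subseteq> star_pairs n" using AX encode_in_star_pairs by blast
  moreover have "star_diameter_at_most (encode ` A) 4"
    unfolding star_diameter_at_most_def
  proof (intro ballI)
    fix x y assume "x \<in> encode ` A" "y \<in> encode ` A"
    then obtain u v where uv: "u \<in> A" "v \<in> A" "x = encode u" "y = encode v" by blast
    then have "hdist u v \<le> 4" using diam by (auto simp: diameter_at_most_def)
    moreover have "u \<in> Xn n" "v \<in> Xn n" using uv AX by auto
    ultimately show "star_dist x y \<le> 4" using hdist_encode[of u n v] uv by simp
  qed
  ultimately obtain G where "G \<subseteq> star_pairs n" "card G = card (encode ` A)"
    "star_diameter_at_most G 4" "down_closed G"
    by (rule obtain_down_closed)
  then interpret down_closed_anticode n G by unfold_locales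
  show ?thesis using card_less[OF assms(1)] \<open>card G = _\<close> card_image[OF inj_on_encode[OF AX]] by simp
qed

lemma power_two_factor_eq:
  fixes a b :: nat
  assumes ab: "a * b = 2 ^ (i + j)" and a: "a \<le> 2 ^ i" and b: "b < 2 ^ Suc j"
  shows "a = 2 ^ i"
proof -
  obtain \<alpha> \<beta> where "a = 2 ^ \<alpha>" "b = 2 ^ \<beta>"
    using ab divides_primepow_nat[OF two_is_prime_nat] by (metis dvd_triv_left dvd_triv_right)
  moreover have "\<alpha> \<le> i" using a calculation by simp
  moreover have "\<beta> < Suc j"
    using b calculation by (intro power_less_imp_less_exp[of 2]) simp_all
  moreover have "\<alpha> + \<beta> = i + j" using ab calculation by (simp add: power_add[symmetric])
  ultimately show ?thesis by simp
qed

theorem theorem2: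
  fixes m n :: nat and C :: "sym list set"
  assumes "n = 2 ^ m" and "m \<ge> 3"
    and "diameter_perfect n C 5"
  shows "real (card C) = 2 ^ (n - 1) / real n"
proof -
  from assms(3) obtain A where CX: "C \<subseteq> Xn n" and dist: "min_dist_at_least C 5"
    and AX: "A \<subseteq> Xn n" and diam: "diameter_at_most A 4" and prod: "card C * card A = card (Xn n)"
    unfolding diameter_perfect_def by auto
  have "8 \<le> n" using assms(1,2) power_increasing[of 3 m "2 :: nat"] by simp
  define k where "k = n - 1 - m"
  have "m < n" using assms(1) less_exp by simp
  then have n1: "n - 1 = k + m" and n: "n = Suc (k + m)" by (simp_all add: k_def)
  have "(2 :: nat) ^ Suc (k + m) = 2 * 2 ^ m * 2 ^ k" by (simp add: power_add)
  then have "(2 :: nat) ^ n = 2 * n * 2 ^ k" by (simp only: n[symmetric] assms(1)[symmetric])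
  then have code: "card C \<le> 2 ^ k" using card_code_le[OF CX dist] \<open>8 \<le> n\<close> by simp
  have "(2 :: nat) ^ Suc (m + m) = 2 * n * n" unfolding assms(1) by (simp add: power_add)
  then have anticode: "card A < 2 ^ Suc (m + m)"
    using card_anticode_less[OF \<open>8 \<le> n\<close> AX diam] by simp
  have "(2 :: nat) ^ (k + (m + m)) = 2 ^ m * 2 ^ (k + m)" by (simp add: power_add mult.left_commute)
  then have "card C * card A = 2 ^ (k + (m + m))"
    using prod card_Xn[of n] by (simp only: n1 assms(1)[symmetric])
  from this code anticode have "card C = 2 ^ k" by (rule power_two_factor_eq)
  then show ?thesis by (simp only: n1) (simp add: assms(1) power_add)
qed

end
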